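(* Let $\alpha\in(0,1)$ and let $f_k$ ($k\in\mathbb N$) be as in an admissible system. Then $\left\|\mathbb W_n^{(\mathbf S)}(f)\right\|_\infty\to0$ in measure as $n\to\infty$, where $\mathbb W_n^{(\mathbf S)}(f):=\sum_{1\le k\le\frac1{2\alpha}\log n}\mathbb W_n(f_k)$.
   Context: $(\mathcal X,\mathcal B,m,T)$ is an ergodic, aperiodic probability preserving system; $\log$ is base $2$. $S_n(h):=\sum_{j=0}^{n-1}h\circ T^j$; $\mathbb W_n(h)(t):=n^{-1/\alpha}S_{\lfloor nt\rfloor}(h)$, $t\in[0,1]$; $\|\cdot\|_\infty$ is the supremum over $t\in[0,1]$. $S_\alpha(\sigma,\beta,\mu)$ denotes the stable law with characteristic function $\exp\{-\sigma^\alpha|\theta|^\alpha(1-i\beta\,\mathrm{sign}(\theta)\tan(\pi\alpha/2))+i\mu\theta\}$ ($\alpha\neq1$). Triangular array: on $(\Omega,\mathcal F,\mathbb P)$ let $\{X_k(m):k,m\in\mathbb N\}$ be independent with $X_k(m)\sim S_\alpha(k^{-1/\alpha},1,0)$; $Y_k(m):=X_k(m)\mathbf 1_{[2^k\le X_k(m)\le4^k]}$; $Z_k(m):=\sum_{j=8^k}^{16^k}\frac{j}{4^k}\mathbf 1_{[j/4^k\le Y_k(m)<(j+1)/4^k]}$. Let $d_k:=4^{k^2}$. An admissible system is a sequence of measurable $f_k:\mathcal X\to\mathbb R$ such that the family $\{f_k\circ T^j:k\in\mathbb N,0\le j<2d_k\}$ has under $m$ the same joint distribution as $\{Z_k(j+1):k\in\mathbb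 N,0\le j<2d_k\}$, together with $g_k:=f_k\circ T^{d_k}$. *)

theory Defs
  imports "HOL-Probability.Probability"
begin

text \<open>Stable law S_alpha(sigma, beta, mu) (alpha \<noteq> 1), identified by its characteristic function.\<close>
definition stable_law :: "real \<Rightarrow> real \<Rightarrow> real \<Rightarrow> real \<Rightarrow> real measure \<Rightarrow> bool" where
  "stable_law \<alpha> \<sigma> \<beta> \<mu> N \<longleftrightarrow> real_distribution N \<and>
     (\<forall>\<theta>::real. char N \<theta> =
        exp (- complex_of_real (\<sigma> powr \<alpha> * \<bar>\<theta>\<bar> powr \<alpha>)
               * (1 - \<i> * complex_of_real (\<beta> * sgn \<theta> * tan (pi * \<alpha> / 2)))
             + \<i> * complex_of_real (\<mu> * \<theta>)))"

definition Ytr :: "nat \<Rightarrow> real \<Rightarrow> real" where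
  "Ytr k x = (if 2 ^ k \<le> x \<and> x \<le> 4 ^ k then x else 0)"

definition Zdisc :: "nat \<Rightarrow> real \<Rightarrow> real" where
  "Zdisc k x = (\<Sum>j = 8 ^ k .. 16 ^ k.
      real j / 4 ^ k * (if real j / 4 ^ k \<le> Ytr k x \<and> Ytr k x < (real j + 1) / 4 ^ k then 1 else 0))"

definition dseq :: "nat \<Rightarrow> nat" where
  "dseq k = 4 ^ (k\<^sup>2)"

definition adm_index :: "(nat \<times> nat) set" where
  "adm_index = {(k, j). 1 \<le> k \<and> j < 2 * dseq k}"

definition ergodic_mp :: "'a measure \<Rightarrow> ('a \<Rightarrow> 'a) \<Rightarrow> bool" where
  "ergodic_mp M T \<longleftrightarrow> T \<in> measurable M M \<and> distr M M T = M \<and>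
     (\<forall>A \<in> sets M. T -` A \<inter> space M = A \<longrightarrow> measure M A = 0 \<or> measure M A = 1)"

definition aperiodic :: "'a measure \<Rightarrow> ('a \<Rightarrow> 'a) \<Rightarrow> bool" where
  "aperiodic M T \<longleftrightarrow> (AE x in M. \<forall>n::nat. n > 0 \<longrightarrow> (T ^^ n) x \<noteq> x)"

definition birk :: "('a \<Rightarrow> 'a) \<Rightarrow> nat \<Rightarrow> ('a \<Rightarrow> real) \<Rightarrow> 'a \<Rightarrow> real" where
  "birk T n h x = (\<Sum>j<n. h ((T ^^ j) x))"

definition Wproc :: "real \<Rightarrow> ('a \<Rightarrow> 'a) \<Rightarrow> nat \<Rightarrow> ('a \<Rightarrow> real) \<Rightarrow> real \<Rightarrow> 'a \<Rightarrow> real" where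
  "Wproc \<alpha> T n h t x = real n powr (- 1 / \<alpha>) * birk T (nat \<lfloor>real n * t\<rfloor>) h x"

definition WS :: "real \<Rightarrow> ('a \<Rightarrow> 'a) \<Rightarrow> nat \<Rightarrow> (nat \<Rightarrow> 'a \<Rightarrow> real) \<Rightarrow> real \<Rightarrow> 'a \<Rightarrow> real" where
  "WS \<alpha> T n f t x = (\<Sum>k \<in> {k::nat. 1 \<le> k \<and> real k \<le> log 2 (real n) / (2 * \<alpha>)}. Wproc \<alpha> T n (f k) t x)"

end

theory Submission
  imports Defs
begin

text \<open>
  By Markov's inequality it suffices that E sup_t |W_n^S(f)(t)| tends to 0. The supremum is at most
  n^(-1/alpha) * sum_{k <= K} S_n(|f_k|) with K = floor(log n / (2 alpha)), whose mean is
  n^(1 - 1/alpha) * sum_{k <= K} E|f_k| by invariance of m. Each f_k is distributed as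
  Z_k <= X_k 1[2^k <= X_k <= 4^k]; splitting [2^k, 4^k] dyadically and using the stable tail bound
  P(|X| >= x) <= C sigma^alpha x^(-alpha), obtained from the characteristic function by the truncation
  inequality, gives E|f_k| = O(4^((1 - alpha) k) / k). The sum over k <= K is dominated by its last
  term and n^(1 - 1/alpha) 4^((1 - alpha) K) <= 1, so the bound is O(1/K).
\<close>

lemma norm_one_minus_exp_le:
  fixes z :: complex
  assumes "Re z \<le> 0"
  shows "norm (1 - exp z) \<le> norm z"
proof -
  have "norm (exp z - exp 0) \<le> 1 * norm (z - 0)"
    by (rule field_differentiable_bound[OF convex_halfspace_Re_le[of 0], of exp exp])
       (auto intro!: derivative_eq_intros simp: assms)
  then show ?thesis
    by (simp add: norm_minus_commute)
qed

lemma set_integral_one_minus_iexp: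
  assumes "u > 0" "x \<noteq> 0"
  shows "(CLBINT t:{-u..u}. 1 - iexp (t * x)) = 2 * (u - sin (u * x) / x)"
proof -
  have "(CLBINT t:{-u..u}. 1 - iexp (t * x)) = (CLBINT t=-u..u. 1 - iexp (t * x))"
    using assms by (subst interval_integral_Icc) auto
  also have "\<dots> = (CLBINT t=-u..ereal 0. 1 - iexp (t * x)) + (CLBINT t=ereal 0..u. 1 - iexp (t * x))"
    using assms by (subst interval_integral_sum; force simp: interval_integrable_isCont)
  also have "\<dots> = (CLBINT t=ereal 0..u. 1 - iexp (t * -x)) + (CLBINT t=ereal 0..u. 1 - iexp (t * x))"
    by (subst interval_integral_reflect) auto
  also have "\<dots> = (CLBINT t=ereal 0..u. 1 - iexp (t * -x) + (1 - iexp (t * x)))"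
    by (subst interval_lebesgue_integral_add(2)[symmetric]) (auto simp: interval_integrable_isCont)
  also have "\<dots> = (LBINT t=ereal 0..u. 2 - 2 * cos (t * x))"
    unfolding exp_Euler cos_of_real by (simp flip: interval_lebesgue_integral_of_real)
  also have "\<dots> = 2 * u - 2 * sin (u * x) / x"
    by (subst interval_lebesgue_integral_diff)
       (auto intro!: interval_integrable_isCont
             simp: interval_lebesgue_integral_of_real integral_cos[OF \<open>x \<noteq> 0\<close>] mult.commute[of _ x])
  finally show ?thesis
    by (simp add: field_simps)
qed

lemma indicator_abs_ge_le_sinc_kernel:
  fixes u x :: real
  assumes "u > 0"
  shows "u * indicator {x. 2 / u \<le> \<bar>x\<bar>} x \<le> (if x = 0 then 0 else 2 * (u - sin (u * x) / x))"
proof -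
  have "2 * sin y \<le> y" if "2 \<le> y" for y :: real
    by (rule order_trans[OF _ that]) auto
  moreover have "y \<le> 2 * sin y" if "y \<le> - 2" for y :: real
    by (rule order_trans[OF that]) auto
  moreover have "y \<le> sin y" if "y < 0" for y :: real
    using sin_x_le_x[of "-y"] that by simp
  ultimately show ?thesis
    using assms
    by (auto simp: divide_simps sin_x_le_x mult.commute[of u] mult_neg_pos split: split_indicator)
qed

context real_distribution
begin

lemma set_integral_one_minus_char:
  assumes u: "u > 0"
  shows "integrable M (\<lambda>x. if x = 0 then 0 else 2 * (u - sin (u * x) / x))"
    and "(CLBINT t:{-u..u}. 1 - char M t) = (LINT x|M. (if x = 0 then 0 else 2 * (u - sin (u * x) / x)))"
proof -
  interpret P: pair_sigma_finite M lborel ..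
  have integrable_pair: "set_integrable (M \<Otimes>\<^sub>M lborel) (UNIV \<times> {- u..u}) (\<lambda>a. 1 - iexp (snd a * fst a))"
    using u unfolding set_integrable_def
    by (intro integrableI_bounded_set_indicator[where B=2])
       (auto simp: lborel.emeasure_pair_measure_Times ennreal_mult_less_top not_less top_unique
             split: split_indicator intro!: order_trans[OF norm_triangle_ineq4])
  have kernel: "(CLBINT t:{-u..u}. 1 - iexp (t * x)) = (if x = 0 then 0 else 2 * (u - sin (u * x) / x))" for x
    using set_integral_one_minus_iexp[OF u, of x] by (cases "x = 0") auto
  have "complex_integrable M (\<lambda>x. CLBINT t:{-u..u}. 1 - iexp (snd (x, t) * fst (x, t)))"
    using integrable_pair unfolding set_integrable_def set_lebesgue_integral_def
    by (intro P.integrable_fst) (simp add: indicator_times split_beta')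
  then have "complex_integrable M (\<lambda>x. if x = 0 then 0 else 2 * (u - sin (u * x) / x))"
    by (subst Bochner_Integration.integrable_cong[OF refl kernel[symmetric]]) (simp add: mult.commute)
  then show "integrable M (\<lambda>x. if x = 0 then 0 else 2 * (u - sin (u * x) / x))"
    unfolding complex_of_real_integrable_eq .
  have "(CLBINT t:{-u..u}. 1 - char M t) = (CLBINT t:{-u..u}. (CLINT x|M. 1 - iexp (t * x)))"
    unfolding char_def
    using prob_space
    by (intro set_lebesgue_integral_cong)
       (auto simp: integrable_const_bound[where B=1] simp del: of_real_mult)
  also have "\<dots> = (CLBINT t. (CLINT x|M. indicator {-u..u} t *\<^sub>R (1 - iexp (t * x))))"
    unfolding set_lebesgue_integral_def
    by (rule Bochner_Integration.integral_cong) (auto split: split_indicator)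
  also have "\<dots> = (CLINT x|M. (CLBINT t:{-u..u}. 1 - iexp (t * x)))"
    using integrable_pair
    by (subst P.Fubini_integral)
       (auto simp: indicator_times split_beta' set_integrable_def set_lebesgue_integral_def)
  also have "\<dots> = (LINT x|M. (if x = 0 then 0 else 2 * (u - sin (u * x) / x)))"
    by (simp add: kernel del: of_real_mult)
  finally show "(CLBINT t:{-u..u}. 1 - char M t) = (LINT x|M. (if x = 0 then 0 else 2 * (u - sin (u * x) / x)))" .
qed

lemma measure_abs_ge_le_char:
  assumes u: "u > 0" and B: "\<And>t. \<bar>t\<bar> \<le> u \<Longrightarrow> cmod (1 - char M t) \<le> B"
  shows "prob {x. 2 / u \<le> \<bar>x\<bar>} \<le> 2 * B"
proof -
  have int: "set_integrable lborel {-u..u} (\<lambda>t. 1 - char M t)"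
    by (intro borel_integrable_atLeastAtMost' continuous_at_imp_continuous_on)
       (auto intro!: continuous_intros isCont_char)
  have "u * prob {x. 2 / u \<le> \<bar>x\<bar>} = (LINT x|M. u * indicator {x. 2 / u \<le> \<bar>x\<bar>} x)"
    by simp
  also have "\<dots> \<le> (LINT x|M. (if x = 0 then 0 else 2 * (u - sin (u * x) / x)))"
    using u set_integral_one_minus_char(1)[OF u]
    by (intro integral_mono indicator_abs_ge_le_sinc_kernel integrable_mult_right integrable_real_indicator)
       (auto simp: emeasure_eq_measure)
  also have "\<dots> = Re (CLBINT t:{-u..u}. 1 - char M t)"
    by (simp add: set_integral_one_minus_char(2)[OF u])
  also have "\<dots> \<le> cmod (CLBINT t:{-u..u}. 1 - char M t)"
    by (rule complex_Re_le_cmod)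
  also have "\<dots> \<le> (LBINT t:{-u..u}. cmod (1 - char M t))"
    by (rule set_integral_norm_bound[OF int])
  also have "\<dots> \<le> (LBINT t:{-u..u}. B)"
    using B int
    by (intro set_integral_mono)
       (auto simp: set_integrable_norm intro!: borel_integrable_atLeastAtMost' continuous_on_const)
  also have "\<dots> = u * (2 * B)"
    using u by (subst set_integral_const) auto
  finally show ?thesis
    using u by simp
qed

end

lemma stable_law_tail_le:
  assumes law: "stable_law \<alpha> \<sigma> \<beta> 0 N" and \<alpha>: "0 < \<alpha>" "\<alpha> \<le> 1" and x: "0 < x"
  shows "measure N {y. x \<le> \<bar>y\<bar>} \<le> 4 * (1 + \<bar>\<beta> * tan (pi * \<alpha> / 2)\<bar>) * \<sigma> powr \<alpha> * x powr - \<alpha>"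
proof -
  define c where "c = \<beta> * tan (pi * \<alpha> / 2)"
  define u where "u = 2 / x"
  interpret real_distribution N
    using law by (simp add: stable_law_def)
  have u: "u > 0"
    using x by (simp add: u_def)
  have "cmod (1 - char N t) \<le> \<sigma> powr \<alpha> * u powr \<alpha> * (1 + \<bar>c\<bar>)" if t: "\<bar>t\<bar> \<le> u" for t
  proof -
    define z where "z = - complex_of_real (\<sigma> powr \<alpha> * \<bar>t\<bar> powr \<alpha>) * (1 - \<i> * complex_of_real (sgn t * c))"
    have "char N t = exp z"
      using law by (simp add: stable_law_def z_def c_def mult_ac)
    then have "cmod (1 - char N t) \<le> cmod z"
      by (simp only:) (rule norm_one_minus_exp_le, simp add: z_def)
    also have "\<dots> = \<sigma> powr \<alpha> * \<bar>t\<bar> powr \<alpha> * cmod (1 - \<i> * complex_of_real (sgn t * c))"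
      by (simp add: z_def norm_mult)
    also have "\<dots> \<le> \<sigma> powr \<alpha> * \<bar>t\<bar> powr \<alpha> * (1 + \<bar>c\<bar>)"
      by (intro mult_left_mono order_trans[OF norm_triangle_ineq4]) (auto simp: norm_mult sgn_if)
    also have "\<dots> \<le> \<sigma> powr \<alpha> * u powr \<alpha> * (1 + \<bar>c\<bar>)"
      using t \<alpha> by (intro mult_right_mono mult_left_mono powr_mono2) auto
    finally show ?thesis .
  qed
  then have "prob {y. 2 / u \<le> \<bar>y\<bar>} \<le> 2 * (\<sigma> powr \<alpha> * u powr \<alpha> * (1 + \<bar>c\<bar>))"
    by (rule measure_abs_ge_le_char[OF u])
  also have "u powr \<alpha> = 2 powr \<alpha> * x powr - \<alpha>"
    using x by (simp add: u_def powr_divide powr_minus_divide)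
  also have "2 * (\<sigma> powr \<alpha> * (2 powr \<alpha> * x powr - \<alpha>) * (1 + \<bar>c\<bar>)) \<le> 2 * (\<sigma> powr \<alpha> * (2 * x powr - \<alpha>) * (1 + \<bar>c\<bar>))"
    using \<alpha> powr_mono[of \<alpha> 1 2] by (intro mult_left_mono mult_right_mono) auto
  finally show ?thesis
    using x by (simp add: u_def c_def algebra_simps)
qed

lemma Ytr_nonneg: "0 \<le> Ytr k x"
  by (auto simp: Ytr_def intro: order_trans[rotated])

lemma Ytr_le: "Ytr k x \<le> 4 ^ k"
  by (simp add: Ytr_def)

lemma Zdisc_nonneg: "0 \<le> Zdisc k x"
  unfolding Zdisc_def by (intro sum_nonneg) auto

lemma Zdisc_le_Ytr: "Zdisc k x \<le> Ytr k x"
proof -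
  define cell where "cell = (\<lambda>j::nat. real j / 4 ^ k \<le> Ytr k x \<and> Ytr k x < (real j + 1) / 4 ^ k)"
  have Zdisc_eq: "Zdisc k x = (\<Sum>j \<in> {8 ^ k .. 16 ^ k} \<inter> Collect cell. real j / 4 ^ k)"
    unfolding Zdisc_def cell_def[symmetric]
    by (simp add: sum.inter_restrict if_distrib cell_def cong: if_cong)
  have cell_unique: "j = j'" if "cell j" "cell j'" for j j'
  proof -
    have "real j < real j' + 1" "real j' < real j + 1"
      using that unfolding cell_def by (simp_all add: field_simps)
    then show ?thesis
      by linarith
  qed
  show ?thesis
  proof (cases "\<exists>j \<in> {8 ^ k .. 16 ^ k}. cell j")
    case False
    then have "{8 ^ k .. 16 ^ k} \<inter> Collect cell = {}"
      by auto
    then show ?thesis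
      using Zdisc_eq Ytr_nonneg[of k x] by simp
  next
    case True
    then obtain j where "j \<in> {8 ^ k .. 16 ^ k}" "cell j"
      by blast
    moreover from this have "{8 ^ k .. 16 ^ k} \<inter> Collect cell = {j}"
      using cell_unique by blast
    ultimately show ?thesis
      using Zdisc_eq by (simp add: cell_def)
  qed
qed

lemma Zdisc_measurable [measurable]: "Zdisc k \<in> borel_measurable borel"
  unfolding Zdisc_def Ytr_def by measurable

lemma le_sum_dyadic_indicator:
  fixes x :: real
  assumes "a \<le> b" "2 ^ a \<le> x" "x \<le> 2 ^ b"
  shows "x \<le> (\<Sum>i = a..b. 2 ^ (i + 1) * indicator {y. 2 ^ i \<le> y} x)"
  using assms
proof (induction b rule: dec_induct)
  case base
  then have "x = 2 ^ a"
    by simp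
  then show ?case
    by (simp add: indicator_def)
next
  case (step b)
  have "x \<le> (\<Sum>i = a..b. 2 ^ (i + 1) * indicator {y. 2 ^ i \<le> y} x)"
  proof (cases "x \<le> 2 ^ b")
    case True
    with step show ?thesis
      by simp
  next
    case False
    then have "x \<le> 2 ^ (b + 1) * indicator {y::real. 2 ^ b \<le> y} x"
      using step by (simp add: indicator_def)
    also have "\<dots> \<le> (\<Sum>i = a..b. 2 ^ (i + 1) * indicator {y. 2 ^ i \<le> y} x)"
      using step(1) by (intro member_le_sum) auto
    finally show ?thesis .
  qed
  then show ?case
    using step(1) by (auto simp: sum.cl_ivl_Suc intro: add_increasing2)
qed

lemma Ytr_le_sum_dyadic_indicator:
  "Ytr k x \<le> (\<Sum>i = k..2 * k. 2 ^ (i + 1) * indicator {y. 2 ^ i \<le> y} x)"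
proof (cases "2 ^ k \<le> x \<and> x \<le> 4 ^ k")
  case True
  moreover have "(4::real) ^ k = 2 ^ (2 * k)"
    by (simp add: power_mult)
  ultimately show ?thesis
    using le_sum_dyadic_indicator[of k "2 * k" x] by (simp add: Ytr_def)
qed (auto simp: Ytr_def intro!: sum_nonneg)

lemma (in real_distribution) integral_Zdisc_le_tail_sum:
  shows "integrable M (Zdisc k)"
    and "(\<integral>x. Zdisc k x \<partial>M) \<le> (\<Sum>i = k..2 * k. 2 ^ (i + 1) * prob {y. 2 ^ i \<le> y})"
proof -
  show Zdisc_integrable: "integrable M (Zdisc k)"
    using Zdisc_le_Ytr[of k] Ytr_le[of k]
    by (intro integrable_const_bound[where B="4 ^ k"] AE_I2)
       (auto simp: abs_of_nonneg Zdisc_nonneg intro: order_trans)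
  define g :: "real \<Rightarrow> real" where "g x = (\<Sum>i = k..2 * k. 2 ^ (i + 1) * indicator {y. 2 ^ i \<le> y} x)" for x :: real
  have g_integrable: "integrable M g"
    unfolding g_def
    by (intro Bochner_Integration.integrable_sum integrable_mult_right integrable_real_indicator)
       (auto simp: emeasure_eq_measure)
  have "Zdisc k x \<le> g x" for x
    unfolding g_def by (rule order_trans[OF Zdisc_le_Ytr Ytr_le_sum_dyadic_indicator])
  then have "(\<integral>x. Zdisc k x \<partial>M) \<le> (\<integral>x. g x \<partial>M)"
    using Zdisc_integrable g_integrable by (intro integral_mono)
  also have "\<dots> = (\<Sum>i = k..2 * k. 2 ^ (i + 1) * prob {y. 2 ^ i \<le> y})"
    unfolding g_def by (subst Bochner_Integration.integral_sum) (auto simp: emeasure_eq_measure)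
  finally show "(\<integral>x. Zdisc k x \<partial>M) \<le> (\<Sum>i = k..2 * k. 2 ^ (i + 1) * prob {y. 2 ^ i \<le> y})" .
qed

lemma sum_power_le_geometric:
  fixes q :: real
  assumes q: "q > 1"
  shows "(\<Sum>i = k..2 * k. q ^ i) \<le> q * (q ^ 2) ^ k / (q - 1)"
proof -
  have "(\<Sum>i = k..2 * k. q ^ i) \<le> (\<Sum>i<2 * k + 1. q ^ i)"
    using q by (intro sum_mono2) auto
  also have "\<dots> = (q ^ (2 * k + 1) - 1) / (q - 1)"
    using q by (subst geometric_sum) auto
  also have "\<dots> \<le> q ^ (2 * k + 1) / (q - 1)"
    using q by (intro divide_right_mono) auto
  also have "q ^ (2 * k + 1) = q * (q ^ 2) ^ k"
    by (simp add: power_mult)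
  finally show ?thesis .
qed

definition trunc_moment_const :: "real \<Rightarrow> real \<Rightarrow> real" where
  "trunc_moment_const \<alpha> \<beta> =
     8 * (1 + \<bar>\<beta> * tan (pi * \<alpha> / 2)\<bar>) * 2 powr (1 - \<alpha>) / (2 powr (1 - \<alpha>) - 1)"

lemma trunc_moment_const_nonneg:
  assumes "\<alpha> \<le> 1"
  shows "0 \<le> trunc_moment_const \<alpha> \<beta>"
proof -
  have "1 \<le> 2 powr (1 - \<alpha>)"
    using assms by (intro ge_one_powr_ge_zero) auto
  then show ?thesis
    by (simp add: trunc_moment_const_def)
qed

lemma integral_Zdisc_stable_le:
  assumes law: "stable_law \<alpha> (real k powr (- 1 / \<alpha>)) \<beta> 0 N"
    and \<alpha>: "0 < \<alpha>" "\<alpha> < 1" and k: "1 \<le> k"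
  shows "(\<integral>x. Zdisc k x \<partial>N) \<le> trunc_moment_const \<alpha> \<beta> * (4 powr (1 - \<alpha>)) ^ k / real k"
proof -
  define L where "L = 4 * (1 + \<bar>\<beta> * tan (pi * \<alpha> / 2)\<bar>)"
  define q where "q = 2 powr (1 - \<alpha>)"
  interpret real_distribution N
    using law by (simp add: stable_law_def)
  have q: "q > 1"
    using \<alpha> by (simp add: q_def)
  have "(real k powr (- 1 / \<alpha>)) powr \<alpha> = real k powr (- 1 / \<alpha> * \<alpha>)"
    by (rule powr_powr)
  then have scale: "(real k powr (- 1 / \<alpha>)) powr \<alpha> = 1 / real k"
    using k \<alpha> by (simp add: powr_minus_divide)
  have dyadic: "(2::real) ^ i * (2 ^ i) powr - \<alpha> = q ^ i" for i
    by (simp add: q_def powr_realpow[symmetric] powr_powr powr_add[symmetric] powr_diff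
                  powr_minus_divide field_simps)
  have "(\<integral>x. Zdisc k x \<partial>N) \<le> (\<Sum>i = k..2 * k. 2 ^ (i + 1) * prob {y. 2 ^ i \<le> y})"
    by (rule integral_Zdisc_le_tail_sum)
  also have "\<dots> \<le> (\<Sum>i = k..2 * k. 2 ^ (i + 1) * (L * (1 / real k) * (2 ^ i) powr - \<alpha>))"
  proof (intro sum_mono mult_left_mono)
    fix i
    have "prob {y. 2 ^ i \<le> y} \<le> prob {y. 2 ^ i \<le> \<bar>y\<bar>}"
      by (intro finite_measure_mono) auto
    also have "\<dots> \<le> L * (1 / real k) * (2 ^ i) powr - \<alpha>"
      using stable_law_tail_le[OF law, of "2 ^ i", unfolded scale] \<alpha> by (simp add: L_def)
    finally show "prob {y. 2 ^ i \<le> y} \<le> L * (1 / real k) * (2 ^ i) powr - \<alpha>" .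
  qed simp
  also have "\<dots> = (2 * L / real k) * (\<Sum>i = k..2 * k. q ^ i)"
    by (simp add: mult.assoc mult.left_commute[of _ L] dyadic sum_distrib_left)
  also have "\<dots> \<le> (2 * L / real k) * (q * (q ^ 2) ^ k / (q - 1))"
    using q by (intro mult_left_mono sum_power_le_geometric) (auto simp: L_def)
  also have "q ^ 2 = 4 powr (1 - \<alpha>)"
    by (simp add: q_def power2_eq_square powr_mult[symmetric])
  finally show ?thesis
    by (simp add: trunc_moment_const_def L_def q_def mult_ac)
qed

lemma sum_power_div_le:
  fixes a :: real
  assumes a: "a > 1"
  obtains C where "C \<ge> 0" "\<And>K. (\<Sum>k = 1..K. a ^ k / real k) \<le> C * a ^ K / real K"
proof
  have summable: "summable (\<lambda>i. real (Suc i) * (1 / a) ^ i)"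
  proof -
    have "summable (\<lambda>i. diffs (\<lambda>_. 1::real) i * (1 / a) ^ i)"
      by (rule termdiff_converges[where K=1]) (use a in \<open>auto intro!: summable_geometric\<close>)
    then show ?thesis
      by (simp add: diffs_def)
  qed
  define C where "C = (\<Sum>i. real (Suc i) * (1 / a) ^ i)"
  show "C \<ge> 0"
    unfolding C_def using a by (intro suminf_nonneg summable) auto
  show "(\<Sum>k = 1..K. a ^ k / real k) \<le> C * a ^ K / real K" for K
  proof (cases "K = 0")
    case False
    have "(\<Sum>k = 1..K. a ^ k / real k) = (\<Sum>i<K. a ^ Suc i / real (Suc i))"
      by (simp add: sum.atLeast1_atMost_eq)
    also have "\<dots> = (\<Sum>i<K. a ^ Suc (K - Suc i) / real (Suc (K - Suc i)))"
      by (rule sum.nat_diff_reindex[symmetric])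
    also have "\<dots> = (\<Sum>i<K. a ^ (K - i) / real (K - i))"
      by (intro sum.cong) (auto simp: Suc_diff_Suc)
    \<comment> \<open>the \<open>i\<close>-th term from the top is at most \<open>(i + 1) a\<^sup>-\<^sup>i\<close> times the last one\<close>
    also have "\<dots> \<le> (\<Sum>i<K. a ^ K / real K * (real (Suc i) * (1 / a) ^ i))"
    proof (rule sum_mono)
      fix i assume i: "i \<in> {..<K}"
      have "K \<le> Suc i * (K - i)"
      proof -
        have "i * 1 \<le> i * (K - i)"
          using i by (intro mult_le_mono2) auto
        moreover have "Suc i * (K - i) = (K - i) + i * (K - i)" "K = (K - i) + i"
          using i by simp_all
        ultimately show ?thesis
          by linarith
      qed
      then have "real K \<le> real (Suc i) * real (K - i)"
        by (metis of_nat_le_iff of_nat_mult)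
      then have "1 / real (K - i) \<le> real (Suc i) / real K"
        using i False by (simp add: field_simps)
      moreover have "a ^ (K - i) = a ^ K * (1 / a) ^ i"
        using i a by (simp add: power_diff field_simps)
      ultimately show "a ^ (K - i) / real (K - i) \<le> a ^ K / real K * (real (Suc i) * (1 / a) ^ i)"
        using a by (simp add: divide_inverse mult_left_mono mult_ac)
    qed
    also have "\<dots> \<le> a ^ K / real K * C"
      unfolding C_def sum_distrib_left[symmetric] using a
      by (intro mult_left_mono sum_le_suminf summable) auto
    finally show ?thesis
      by (simp add: mult.commute)
  qed simp
qed

lemma Collect_nat_le_real_eq_atLeastAtMost:
  "{k::nat. 1 \<le> k \<and> real k \<le> y} = {1..nat \<lfloor>y\<rfloor>}"
proof safe
  fix k :: nat
  assume "k \<in> {1..nat \<lfloor>y\<rfloor>}"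
  then have "int k \<le> \<lfloor>y\<rfloor>"
    by (auto simp: le_nat_iff)
  then show "real k \<le> y"
    by (simp add: le_floor_iff)
qed (auto simp: le_nat_iff le_floor_iff)

definition nlevels :: "real \<Rightarrow> nat \<Rightarrow> nat" where
  "nlevels \<alpha> n = nat \<lfloor>log 2 (real n) / (2 * \<alpha>)\<rfloor>"

lemma WS_eq_sum_nlevels:
  "WS \<alpha> T n f t x = (\<Sum>k = 1..nlevels \<alpha> n. Wproc \<alpha> T n (f k) t x)"
  unfolding WS_def nlevels_def Collect_nat_le_real_eq_atLeastAtMost ..

lemma nlevels_ge:
  assumes "0 < \<alpha>" "1 \<le> n"
  shows "log 2 (real n) / (2 * \<alpha>) - 1 \<le> real (nlevels \<alpha> n)"
    and "real (nlevels \<alpha> n) \<le> log 2 (real n) / (2 * \<alpha>)"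
proof -
  have "0 \<le> log 2 (real n) / (2 * \<alpha>)"
    using assms by simp
  then have "real (nlevels \<alpha> n) = real_of_int \<lfloor>log 2 (real n) / (2 * \<alpha>)\<rfloor>"
    by (simp add: nlevels_def)
  then show "log 2 (real n) / (2 * \<alpha>) - 1 \<le> real (nlevels \<alpha> n)"
    and "real (nlevels \<alpha> n) \<le> log 2 (real n) / (2 * \<alpha>)"
    by linarith+
qed

lemma nlevels_at_top:
  assumes "0 < \<alpha>"
  shows "filterlim (\<lambda>n. real (nlevels \<alpha> n)) at_top sequentially"
proof (rule filterlim_at_top_mono)
  have "filterlim (\<lambda>n. 1 / (ln 2 * (2 * \<alpha>)) * ln (real n)) at_top sequentially"
    using assms
    by (intro filterlim_tendsto_pos_mult_at_top[OF tendsto_const]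
              filterlim_compose[OF ln_at_top filterlim_real_sequentially]) auto
  then have "filterlim (\<lambda>n. -1 + 1 / (ln 2 * (2 * \<alpha>)) * ln (real n)) at_top sequentially"
    by (rule filterlim_tendsto_add_at_top[OF tendsto_const])
  then show "filterlim (\<lambda>n. log 2 (real n) / (2 * \<alpha>) - 1) at_top sequentially"
    by (simp add: log_def field_simps)
  show "\<forall>\<^sub>F n in sequentially. log 2 (real n) / (2 * \<alpha>) - 1 \<le> real (nlevels \<alpha> n)"
    using nlevels_ge(1)[OF assms] by (intro eventually_sequentiallyI[of 1]) auto
qed

lemma powr_mult_power_le_one:
  assumes \<alpha>: "0 < \<alpha>" "\<alpha> < 1" and n: "1 \<le> n" and K: "real K \<le> log 2 (real n) / (2 * \<alpha>)"
  shows "real n powr (1 - 1 / \<alpha>) * (4 powr (1 - \<alpha>)) ^ K \<le> 1"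
proof -
  have "(4 powr (1 - \<alpha>)) ^ K = 4 powr ((1 - \<alpha>) * real K)"
    by (simp add: powr_powr flip: powr_realpow)
  also have "\<dots> = 2 powr (2 * ((1 - \<alpha>) * real K))"
    using powr_powr[of 2 2 "(1 - \<alpha>) * real K"] by simp
  also have "\<dots> \<le> 2 powr (2 * ((1 - \<alpha>) * (log 2 (real n) / (2 * \<alpha>))))"
    using K \<alpha> by (intro powr_mono mult_left_mono) auto
  also have "2 * ((1 - \<alpha>) * (log 2 (real n) / (2 * \<alpha>))) = log 2 (real n) * ((1 - \<alpha>) / \<alpha>)"
    using \<alpha> by (simp add: field_simps)
  also have "2 powr (log 2 (real n) * ((1 - \<alpha>) / \<alpha>)) = (2 powr log 2 (real n)) powr ((1 - \<alpha>) / \<alpha>)"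
    by (rule powr_powr[symmetric])
  also have "\<dots> = real n powr ((1 - \<alpha>) / \<alpha>)"
    using n by simp
  finally have "real n powr (1 - 1 / \<alpha>) * (4 powr (1 - \<alpha>)) ^ K
      \<le> real n powr (1 - 1 / \<alpha> + (1 - \<alpha>) / \<alpha>)"
    by (simp add: powr_add mult_left_mono)
  also have "1 - 1 / \<alpha> + (1 - \<alpha>) / \<alpha> = 0"
    using \<alpha> by (simp add: field_simps)
  finally show ?thesis
    using n by simp
qed

lemma distr_funpow_eq:
  assumes "T \<in> measurable M M" "distr M M T = M"
  shows "distr M M (T ^^ n) = M"
proof (induction n)
  case (Suc n)
  have "distr M M (T ^^ Suc n) = distr M M ((T ^^ n) \<circ> T)"
    by (simp only: funpow_Suc_right)
  also have "\<dots> = distr (distr M M T) M (T ^^ n)"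
    using assms by (intro distr_distr[symmetric]) (auto intro: measurable_compose_n)
  also have "\<dots> = M"
    using assms Suc by simp
  finally show ?case .
qed (simp add: distr_id2)

lemma birk_abs_le:
  assumes "m \<le> n"
  shows "\<bar>birk T m h x\<bar> \<le> birk T n (\<lambda>y. \<bar>h y\<bar>) x"
proof -
  have "\<bar>birk T m h x\<bar> \<le> birk T m (\<lambda>y. \<bar>h y\<bar>) x"
    unfolding birk_def by (rule sum_abs)
  also have "\<dots> \<le> birk T n (\<lambda>y. \<bar>h y\<bar>) x"
    unfolding birk_def using assms by (intro sum_mono2) auto
  finally show ?thesis .
qed

lemma
  assumes T: "T \<in> measurable M M" "distr M M T = M" and h: "integrable M h"
  shows integrable_birk: "integrable M (birk T n h)"
    and integral_birk: "(\<integral>x. birk T n h x \<partial>M) = real n * (\<integral>x. h x \<partial>M)"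
proof -
  have h_funpow: "integrable M (\<lambda>x. h ((T ^^ j) x)) \<and> (\<integral>x. h ((T ^^ j) x) \<partial>M) = (\<integral>x. h x \<partial>M)" for j
    using integrable_distr_eq[OF measurable_compose_n[OF T(1)], of h j]
          integral_distr[OF measurable_compose_n[OF T(1)], of h j] h
    by (simp add: distr_funpow_eq[OF T] borel_measurable_integrable)
  then show "integrable M (birk T n h)"
    unfolding birk_def by (intro Bochner_Integration.integrable_sum) auto
  show "(\<integral>x. birk T n h x \<partial>M) = real n * (\<integral>x. h x \<partial>M)"
    unfolding birk_def using h_funpow by (simp add: Bochner_Integration.integral_sum)
qed

lemma sup_abs_sum_Wproc_le:
  "(SUP t\<in>{0..1}. \<bar>\<Sum>k\<in>K. Wproc \<alpha> T n (f k) t x\<bar>)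
     \<le> real n powr (- 1 / \<alpha>) * (\<Sum>k\<in>K. birk T n (\<lambda>y. \<bar>f k y\<bar>) x)"
proof (rule cSUP_least)
  fix t :: real
  assume t: "t \<in> {0..1}"
  then have "real n * t \<le> real n"
    by (simp add: mult_left_le)
  then have "\<lfloor>real n * t\<rfloor> \<le> int n"
    by (simp add: floor_le_iff)
  then have "nat \<lfloor>real n * t\<rfloor> \<le> n"
    by simp
  then have "\<bar>Wproc \<alpha> T n (f k) t x\<bar> \<le> real n powr (- 1 / \<alpha>) * birk T n (\<lambda>y. \<bar>f k y\<bar>) x" for k
    unfolding Wproc_def abs_mult by (simp add: mult_left_mono birk_abs_le)
  then have "\<bar>\<Sum>k\<in>K. Wproc \<alpha> T n (f k) t x\<bar> \<le> (\<Sum>k\<in>K. real n powr (- 1 / \<alpha>) * birk T n (\<lambda>y. \<bar>f k y\<bar>) x)"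
    by (intro order_trans[OF sum_abs] sum_mono)
  then show "\<bar>\<Sum>k\<in>K. Wproc \<alpha> T n (f k) t x\<bar> \<le> real n powr (- 1 / \<alpha>) * (\<Sum>k\<in>K. birk T n (\<lambda>y. \<bar>f k y\<bar>) x)"
    by (simp add: sum_distrib_left)
qed simp

lemma measure_sup_abs_sum_Wproc_gt_le:
  assumes M: "prob_space M" and T: "T \<in> measurable M M" "distr M M T = M"
    and f: "\<And>k. k \<in> K \<Longrightarrow> integrable M (f k)" and \<epsilon>: "\<epsilon> > 0"
  shows "measure M {x \<in> space M. (SUP t\<in>{0..1}. \<bar>\<Sum>k\<in>K. Wproc \<alpha> T n (f k) t x\<bar>) > \<epsilon>}
           \<le> real n powr (- 1 / \<alpha>) * real n * (\<Sum>k\<in>K. \<integral>x. \<bar>f k x\<bar> \<partial>M) / \<epsilon>"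
proof -
  interpret prob_space M by (rule M)
  define G where "G x = real n powr (- 1 / \<alpha>) * (\<Sum>k\<in>K. birk T n (\<lambda>y. \<bar>f k y\<bar>) x)" for x
  have birk_integrable: "integrable M (birk T n (\<lambda>y. \<bar>f k y\<bar>))" if "k \<in> K" for k
    using f[OF that] by (intro integrable_birk[OF T] integrable_abs)
  have G_integrable: "integrable M G"
    unfolding G_def using birk_integrable by (intro integrable_mult_right Bochner_Integration.integrable_sum)
  have G_nonneg: "G x \<ge> 0" for x
    unfolding G_def birk_def by (intro mult_nonneg_nonneg sum_nonneg) auto
  let ?A = "{x \<in> space M. (SUP t\<in>{0..1}. \<bar>\<Sum>k\<in>K. Wproc \<alpha> T n (f k) t x\<bar>) > \<epsilon>}"
  let ?B = "{x \<in> space M. G x \<ge> \<epsilon>}"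
  have "measure M ?A \<le> measure M ?B"
  proof (cases "?A \<in> sets M")
    case True
    have "?A \<subseteq> ?B"
      using sup_abs_sum_Wproc_le[where K=K and \<alpha>=\<alpha> and T=T and n=n and f=f]
      unfolding G_def by (auto intro: order_trans[OF less_imp_le])
    moreover have "?B \<in> sets M"
      using G_integrable by measurable
    ultimately show ?thesis
      using True by (intro finite_measure_mono) auto
  qed (simp add: measure_notin_sets)
  also have "\<dots> \<le> (\<integral>x. G x \<partial>M) / \<epsilon>"
    using \<epsilon> G_nonneg by (intro integral_Markov_inequality_measure[OF G_integrable, of "space M"]) auto
  also have "(\<integral>x. G x \<partial>M) = real n powr (- 1 / \<alpha>) * real n * (\<Sum>k\<in>K. \<integral>x. \<bar>f k x\<bar> \<partial>M)"
    unfolding G_def using birk_integrable f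
    by (simp add: Bochner_Integration.integral_sum integral_birk[OF T] sum_distrib_left mult.assoc)
  finally show ?thesis .
qed

lemma
  fixes h :: "'c \<Rightarrow> 'd::{banach, second_countable_topology}"
  assumes eq: "distr M N F = distr P N G"
    and F: "F \<in> measurable M N" and G: "G \<in> measurable P N" and h: "h \<in> borel_measurable N"
  shows integrable_comp_iff_of_distr_eq: "integrable M (\<lambda>x. h (F x)) \<longleftrightarrow> integrable P (\<lambda>\<omega>. h (G \<omega>))"
    and integral_comp_eq_of_distr_eq: "(\<integral>x. h (F x) \<partial>M) = (\<integral>\<omega>. h (G \<omega>) \<partial>P)"
  using integrable_distr_eq[OF F h] integrable_distr_eq[OF G h]
    integral_distr[OF F h] integral_distr[OF G h] eq
  by simp_all

lemma admissible_integral_abs_le: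
  assumes T: "T \<in> measurable M M" and f: "\<And>k. f k \<in> borel_measurable M"
    and X: "\<And>k m. 1 \<le> k \<Longrightarrow> 1 \<le> m \<Longrightarrow> X k m \<in> borel_measurable P"
    and law: "stable_law \<alpha> (real k powr (- 1 / \<alpha>)) \<beta> 0 (distr P borel (X k 1))"
    and adm: "distr M (PiM adm_index (\<lambda>_. borel))
                  (\<lambda>x. \<lambda>i\<in>adm_index. f (fst i) ((T ^^ snd i) x))
              = distr P (PiM adm_index (\<lambda>_. borel))
                  (\<lambda>\<omega>. \<lambda>i\<in>adm_index. Zdisc (fst i) (X (fst i) (snd i + 1) \<omega>))"
    and \<alpha>: "0 < \<alpha>" "\<alpha> < 1" and k: "1 \<le> k"
  shows "integrable M (f k)"
    and "(\<integral>x. \<bar>f k x\<bar> \<partial>M) \<le> trunc_moment_const \<alpha> \<beta> * (4 powr (1 - \<alpha>)) ^ k / real k"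
proof -
  interpret real_distribution "distr P borel (X k 1)"
    using law by (simp add: stable_law_def)
  let ?F = "\<lambda>x. \<lambda>i\<in>adm_index. f (fst i) ((T ^^ snd i) x)"
  let ?G = "\<lambda>\<omega>. \<lambda>i\<in>adm_index. Zdisc (fst i) (X (fst i) (snd i + 1) \<omega>)"
  let ?h = "\<lambda>\<omega> :: nat \<times> nat \<Rightarrow> real. \<bar>\<omega> (k, 0)\<bar>"
  have idx: "(k, 0) \<in> adm_index"
    using k by (simp add: adm_index_def dseq_def)
  have F: "?F \<in> measurable M (PiM adm_index (\<lambda>_. borel))"
    by (intro measurable_restrict) (auto intro: measurable_compose[OF measurable_compose_n[OF T] f])
  have G: "?G \<in> measurable P (PiM adm_index (\<lambda>_. borel))"
    by (intro measurable_restrict) (auto simp: adm_index_def intro!: measurable_compose[OF X Zdisc_measurable])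
  have h: "?h \<in> borel_measurable (PiM adm_index (\<lambda>_. borel))"
    by (rule borel_measurable_abs[OF measurable_component_singleton[OF idx]])
  have Xk: "X k 1 \<in> borel_measurable P"
    using X k by simp
  have "integrable P (\<lambda>\<omega>. Zdisc k (X k 1 \<omega>))"
    using integral_Zdisc_le_tail_sum(1) integrable_distr_eq[OF Xk Zdisc_measurable] by simp
  then have "integrable M (\<lambda>x. \<bar>f k x\<bar>)"
    using integrable_comp_iff_of_distr_eq[OF adm F G h] by (simp add: idx abs_of_nonneg[OF Zdisc_nonneg])
  then show "integrable M (f k)"
    using f by (simp add: integrable_abs_iff)
  have "(\<integral>x. \<bar>f k x\<bar> \<partial>M) = (\<integral>\<omega>. Zdisc k (X k 1 \<omega>) \<partial>P)"
    using integral_comp_eq_of_distr_eq[OF adm F G h] by (simp add: idx abs_of_nonneg[OF Zdisc_nonneg])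
  also have "\<dots> = (\<integral>y. Zdisc k y \<partial>distr P borel (X k 1))"
    by (rule integral_distr[symmetric, OF Xk Zdisc_measurable])
  also have "\<dots> \<le> trunc_moment_const \<alpha> \<beta> * (4 powr (1 - \<alpha>)) ^ k / real k"
    by (rule integral_Zdisc_stable_le[OF law \<alpha> k])
  finally show "(\<integral>x. \<bar>f k x\<bar> \<partial>M) \<le> trunc_moment_const \<alpha> \<beta> * (4 powr (1 - \<alpha>)) ^ k / real k" .
qed

lemma measure_sup_WS_gt_le:
  assumes M: "prob_space M" and T: "T \<in> measurable M M" "distr M M T = M"
    and \<alpha>: "0 < \<alpha>" "\<alpha> < 1" and \<epsilon>: "\<epsilon> > 0"
    and f: "\<And>k. 1 \<le> k \<Longrightarrow> integrable M (f k)"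
    and moments: "\<And>k. 1 \<le> k \<Longrightarrow> (\<integral>x. \<bar>f k x\<bar> \<partial>M) \<le> c * (4 powr (1 - \<alpha>)) ^ k / real k"
    and c: "c \<ge> 0"
  obtains C where "\<And>n. 1 \<le> n \<Longrightarrow>
    measure M {x \<in> space M. (SUP t\<in>{0..1}. \<bar>WS \<alpha> T n f t x\<bar>) > \<epsilon>} \<le> C / real (nlevels \<alpha> n)"
proof -
  define a where "a = 4 powr (1 - \<alpha>)"
  obtain C where C: "C \<ge> 0" "\<And>K. (\<Sum>k = 1..K. a ^ k / real k) \<le> C * a ^ K / real K"
    using sum_power_div_le[of a] \<alpha> by (auto simp: a_def)
  have "measure M {x \<in> space M. (SUP t\<in>{0..1}. \<bar>WS \<alpha> T n f t x\<bar>) > \<epsilon>}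
      \<le> c * C / \<epsilon> / real (nlevels \<alpha> n)" if n: "1 \<le> n" for n
  proof -
    let ?K = "nlevels \<alpha> n"
    have "measure M {x \<in> space M. (SUP t\<in>{0..1}. \<bar>WS \<alpha> T n f t x\<bar>) > \<epsilon>}
        \<le> real n powr (- 1 / \<alpha>) * real n * (\<Sum>k = 1..?K. \<integral>x. \<bar>f k x\<bar> \<partial>M) / \<epsilon>"
      unfolding WS_eq_sum_nlevels using f
      by (intro measure_sup_abs_sum_Wproc_gt_le[OF M T _ \<epsilon>]) auto
    also have "\<dots> \<le> real n powr (- 1 / \<alpha>) * real n * (c * (C * a ^ ?K / real ?K)) / \<epsilon>"
    proof -
      have "(\<Sum>k = 1..?K. \<integral>x. \<bar>f k x\<bar> \<partial>M) \<le> (\<Sum>k = 1..?K. c * a ^ k / real k)"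
        using moments by (intro sum_mono) (simp add: a_def)
      also have "\<dots> = c * (\<Sum>k = 1..?K. a ^ k / real k)"
        by (simp add: sum_distrib_left)
      also have "\<dots> \<le> c * (C * a ^ ?K / real ?K)"
        using C(2) c by (rule mult_left_mono)
      finally show ?thesis
        using \<epsilon> by (intro divide_right_mono mult_left_mono) simp_all
    qed
    also have "\<dots> = c * C / \<epsilon> / real ?K * (real n powr (1 - 1 / \<alpha>) * a ^ ?K)"
    proof -
      have "real n powr (- 1 / \<alpha>) * real n = real n powr (1 - 1 / \<alpha>)"
        using n by (simp add: powr_diff powr_minus_divide)
      then show ?thesis
        by (simp add: divide_inverse mult_ac)
    qed
    also have "\<dots> \<le> c * C / \<epsilon> / real ?K"
    proof (rule mult_left_le)
      show "real n powr (1 - 1 / \<alpha>) * a ^ ?K \<le> 1"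
        unfolding a_def by (rule powr_mult_power_le_one[OF \<alpha> n nlevels_ge(2)[OF \<alpha>(1) n]])
      show "0 \<le> c * C / \<epsilon> / real ?K"
        using c C(1) \<epsilon> by simp
    qed
    finally show ?thesis .
  qed
  then show ?thesis
    by (rule that)
qed

theorem lemma3p2:
  fixes M :: "'a measure" and T :: "'a \<Rightarrow> 'a" and \<alpha> :: real
    and f :: "nat \<Rightarrow> 'a \<Rightarrow> real"
    and P :: "'b measure" and X :: "nat \<Rightarrow> nat \<Rightarrow> 'b \<Rightarrow> real"
  assumes M: "prob_space M"
    and erg: "ergodic_mp M T"
    and aper: "aperiodic M T"
    and alpha: "0 < \<alpha>" "\<alpha> < 1"
    and P: "prob_space P"
    and Xindep: "prob_space.indep_vars P (\<lambda>_. borel) (\<lambda>(k, m). X k m) {(k, m). 1 \<le> k \<and> 1 \<le> m}"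
    and Xlaw: "\<And>k m. 1 \<le> k \<Longrightarrow> 1 \<le> m \<Longrightarrow>
                 stable_law \<alpha> (real k powr (- 1 / \<alpha>)) 1 0 (distr P borel (X k m))"
    and fmeas: "\<And>k. f k \<in> borel_measurable M"
    and adm: "distr M (PiM adm_index (\<lambda>_. borel))
                  (\<lambda>x. \<lambda>i\<in>adm_index. f (fst i) ((T ^^ snd i) x))
              = distr P (PiM adm_index (\<lambda>_. borel))
                  (\<lambda>\<omega>. \<lambda>i\<in>adm_index. Zdisc (fst i) (X (fst i) (snd i + 1) \<omega>))"
  shows "\<forall>\<epsilon>>0. (\<lambda>n. measure M {x \<in> space M. (SUP t\<in>{0..1}. \<bar>WS \<alpha> T n f t x\<bar>) > \<epsilon>})
                  \<longlonglongrightarrow> 0"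
proof (intro allI impI)
  fix \<epsilon> :: real
  assume \<epsilon>: "\<epsilon> > 0"
  have T: "T \<in> measurable M M" "distr M M T = M"
    using erg by (auto simp: ergodic_mp_def)
  have X: "X k m \<in> borel_measurable P" if "1 \<le> k" "1 \<le> m" for k m
    using Xindep that by (auto simp: prob_space.indep_vars_def[OF P])
  note moments = admissible_integral_abs_le[OF T(1) fmeas X Xlaw[OF _ order_refl] adm alpha]
  obtain C where C: "\<And>n. 1 \<le> n \<Longrightarrow>
      measure M {x \<in> space M. (SUP t\<in>{0..1}. \<bar>WS \<alpha> T n f t x\<bar>) > \<epsilon>} \<le> C / real (nlevels \<alpha> n)"
    using measure_sup_WS_gt_le[OF M T alpha \<epsilon> moments trunc_moment_const_nonneg[OF less_imp_le[OF alpha(2)]]]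
    by blast
  have lim: "(\<lambda>n. C / real (nlevels \<alpha> n)) \<longlonglongrightarrow> 0"
    using nlevels_at_top[OF alpha(1)]
    by (intro tendsto_divide_0[OF tendsto_const] filterlim_at_top_imp_at_infinity)
  have bound: "\<forall>\<^sub>F n in sequentially.
      measure M {x \<in> space M. (SUP t\<in>{0..1}. \<bar>WS \<alpha> T n f t x\<bar>) > \<epsilon>} \<le> C / real (nlevels \<alpha> n)"
    using C by (rule eventually_sequentiallyI)
  show "(\<lambda>n. measure M {x \<in> space M. (SUP t\<in>{0..1}. \<bar>WS \<alpha> T n f t x\<bar>) > \<epsilon>}) \<longlonglongrightarrow> 0"
    by (rule tendsto_sandwich[OF _ bound tendsto_const lim]) simp
qed

end
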